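(* Let $G$ be an additive subgroup of $\mathbb{C}$ with $\mathrm{rank}\,G\ge 2$, and let $V$ be a nontrivial irreducible Harish-Chandra module over $\mathrm{Vir}[G]$. Let $I$ be a finite subset of $\mathrm{supp}V$ and let $G_I$ be a subgroup of $G$ such that (a) $G_I\cong\mathbb{Z}^k$ for some $k\in\mathbb{N}$, (b) $U(G_I)V_\mu=U(G_I)V_{\mu'}$ and $\mu-\mu'\in G_I$ for all $\mu,\mu'\in I$, and (c) $V_\mu$ is an irreducible $U(G_I)_0$-module for every $\mu\in I$. Let $G'$ be a subgroup of $G$ containing $G_I$. Then for any $\lambda\in I$, the $\mathrm{Vir}[G']$-module $V_{\lambda+G'}$ has a unique irreducible $\mathrm{Vir}[G']$-subquotient $V'$ with $\dim V'_\mu=\dim V_\mu$ for all $\mu\in I$.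
   Context: $\mathbb{N}$ denotes the positive integers. For a nonzero additive subgroup $G$ of $\mathbb{C}$, $\mathrm{Vir}[G]$ is the complex Lie algebra with basis $\{C,d_x:x\in G\}$ and brackets $[d_x,d_y]=(y-x)d_{x+y}+\delta_{x,-y}\frac{x^3-x}{12}C$, $[C,d_x]=0$; for a subgroup $H\subseteq G$, $\mathrm{Vir}[H]$ is the subalgebra spanned by $C$ and $d_x$, $x\in H$. $U(H)$ is the universal enveloping algebra of $\mathrm{Vir}[H]$, and $U(H)_a=\{y\in U(H):[d_0,y]=ay\}$. The rank of a subgroup $A$ of $\mathbb{C}$ is the maximal $r$ such that there exist nonzero $g_1,\dots,g_r\in A$ with $\mathbb{Z}g_1+\dots+\mathbb{Z}g_r$ a direct sum. For a module $V$ on which $C$ acts as a scalar, $V_\lambda=\{v:d_0v=\lambda v\}$; weight module: sum of weight spaces; Harish-Chandra: weight module with finite-dimensional weight spaces; $\mathrm{supp}V=\{\lambda:V_\lambda\ne0\}$; trivial: $\mathrm{Vir}[G]V=0$. For $S\subseteq\mathbb{C}$, $V_S=\bigoplus_{x\in S}V_x$; for a subgroup $H$ and $\lambda\in\mathbb{C}$, $V_{\lambda+H}$ is a $\mathrm{Vir}[H]$-module. A subquotient of a module is $W/W'$ for submodules $W'\subseteq W$. *)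

theory Defs
  imports Complex_Main "HOL-Library.Extended_Nat"
begin

definition add_subgroup :: "complex set \<Rightarrow> bool" where
  "add_subgroup A \<longleftrightarrow> 0 \<in> A \<and> (\<forall>x\<in>A. \<forall>y\<in>A. x + y \<in> A) \<and> (\<forall>x\<in>A. - x \<in> A)"

definition direct_family :: "complex set \<Rightarrow> nat \<Rightarrow> (nat \<Rightarrow> complex) \<Rightarrow> bool" where
  "direct_family A r g \<longleftrightarrow> (\<forall>i<r. g i \<in> A \<and> g i \<noteq> 0) \<and>
     (\<forall>n::nat \<Rightarrow> int. (\<Sum>i<r. of_int (n i) * g i) = 0 \<longrightarrow> (\<forall>i<r. of_int (n i) * g i = 0))"

definition grank :: "complex set \<Rightarrow> enat" where
  "grank A = Sup {enat r | r. \<exists>g. direct_family A r g}"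

definition iso_Zk :: "complex set \<Rightarrow> nat \<Rightarrow> bool" where
  "iso_Zk A k \<longleftrightarrow> (\<exists>g::nat \<Rightarrow> complex.
     A = {(\<Sum>i<k. of_int (n i) * g i) | n::nat \<Rightarrow> int. True} \<and>
     (\<forall>n::nat \<Rightarrow> int. (\<Sum>i<k. of_int (n i) * g i) = 0 \<longrightarrow> (\<forall>i<k. n i = 0)))"

text \<open>The module is the whole complex vector space 'v (scalar multiplication \<open>sc\<close>);
  \<open>\<rho> x\<close> is the action of d_x and C acts by the scalar \<open>c\<close>.\<close>

definition vir_module ::
  "(complex \<Rightarrow> 'v::ab_group_add \<Rightarrow> 'v) \<Rightarrow> complex set \<Rightarrow> complex \<Rightarrow> (complex \<Rightarrow> 'v \<Rightarrow> 'v) \<Rightarrow> bool" where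
  "vir_module sc G c \<rho> \<longleftrightarrow> vector_space sc \<and>
     (\<forall>x\<in>G. Vector_Spaces.linear sc sc (\<rho> x)) \<and>
     (\<forall>x\<in>G. \<forall>y\<in>G. \<forall>v. \<rho> x (\<rho> y v) - \<rho> y (\<rho> x v) =
        sc (y - x) (\<rho> (x + y) v) + (if x = - y then sc ((x^3 - x) / 12 * c) v else 0))"

definition wt :: "(complex \<Rightarrow> 'v::ab_group_add \<Rightarrow> 'v) \<Rightarrow> (complex \<Rightarrow> 'v \<Rightarrow> 'v) \<Rightarrow> complex \<Rightarrow> 'v set" where
  "wt sc \<rho> lam = {v. \<rho> 0 v = sc lam v}"

definition supp :: "(complex \<Rightarrow> 'v::ab_group_add \<Rightarrow> 'v) \<Rightarrow> (complex \<Rightarrow> 'v \<Rightarrow> 'v) \<Rightarrow> complex set" where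
  "supp sc \<rho> = {lam. wt sc \<rho> lam \<noteq> {0}}"

definition wsum :: "(complex \<Rightarrow> 'v::ab_group_add \<Rightarrow> 'v) \<Rightarrow> (complex \<Rightarrow> 'v \<Rightarrow> 'v) \<Rightarrow> complex set \<Rightarrow> 'v set" where
  "wsum sc \<rho> S = module.span sc (\<Union>\<mu>\<in>S. wt sc \<rho> \<mu>)"

definition fin_dim :: "(complex \<Rightarrow> 'v::ab_group_add \<Rightarrow> 'v) \<Rightarrow> 'v set \<Rightarrow> bool" where
  "fin_dim sc S \<longleftrightarrow> (\<exists>B. finite B \<and> S \<subseteq> module.span sc B)"

definition weight_module :: "(complex \<Rightarrow> 'v::ab_group_add \<Rightarrow> 'v) \<Rightarrow> (complex \<Rightarrow> 'v \<Rightarrow> 'v) \<Rightarrow> bool" where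
  "weight_module sc \<rho> \<longleftrightarrow> wsum sc \<rho> UNIV = UNIV"

definition harish_chandra :: "(complex \<Rightarrow> 'v::ab_group_add \<Rightarrow> 'v) \<Rightarrow> (complex \<Rightarrow> 'v \<Rightarrow> 'v) \<Rightarrow> bool" where
  "harish_chandra sc \<rho> \<longleftrightarrow> weight_module sc \<rho> \<and> (\<forall>lam. fin_dim sc (wt sc \<rho> lam))"

text \<open>Vir[H]-submodule (C acts by a scalar, so only the d_x, x in H, matter).\<close>
definition submod :: "(complex \<Rightarrow> 'v::ab_group_add \<Rightarrow> 'v) \<Rightarrow> (complex \<Rightarrow> 'v \<Rightarrow> 'v) \<Rightarrow> complex set \<Rightarrow> 'v set \<Rightarrow> bool" where
  "submod sc \<rho> H W \<longleftrightarrow> module.subspace sc W \<and> (\<forall>x\<in>H. \<forall>w\<in>W. \<rho> x w \<in> W)"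

definition irreducible_module ::
  "(complex \<Rightarrow> 'v::ab_group_add \<Rightarrow> 'v) \<Rightarrow> (complex \<Rightarrow> 'v \<Rightarrow> 'v) \<Rightarrow> complex set \<Rightarrow> bool" where
  "irreducible_module sc \<rho> G \<longleftrightarrow> (UNIV :: 'v set) \<noteq> {0} \<and>
     (\<forall>W. submod sc \<rho> G W \<longrightarrow> W = {0} \<or> W = UNIV)"

definition trivial_module ::
  "(complex \<Rightarrow> 'v::ab_group_add \<Rightarrow> 'v) \<Rightarrow> complex set \<Rightarrow> complex \<Rightarrow> (complex \<Rightarrow> 'v \<Rightarrow> 'v) \<Rightarrow> bool" where
  "trivial_module sc G c \<rho> \<longleftrightarrow> (\<forall>v. sc c v = 0) \<and> (\<forall>x\<in>G. \<forall>v. \<rho> x v = 0)"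

text \<open>U(H) is spanned by the monomials d_{x_1}...d_{x_n} (x_i in H) and powers of C; C acts
  by a scalar, so the action of U(H) on V is spanned by the operators below.
  A monomial has ad d_0-weight x_1+...+x_n, so U(H)_a acts via the monomials of weight a.\<close>
definition mono :: "(complex \<Rightarrow> 'v \<Rightarrow> 'v) \<Rightarrow> complex list \<Rightarrow> 'v \<Rightarrow> 'v" where
  "mono \<rho> xs = foldr (\<lambda>x f. \<rho> x \<circ> f) xs id"

definition U_apply :: "(complex \<Rightarrow> 'v::ab_group_add \<Rightarrow> 'v) \<Rightarrow> (complex \<Rightarrow> 'v \<Rightarrow> 'v) \<Rightarrow> complex set \<Rightarrow> 'v set \<Rightarrow> 'v set" where
  "U_apply sc \<rho> H S = module.span sc {mono \<rho> xs v | xs v. set xs \<subseteq> H \<and> v \<in> S}"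

definition irred_U0 :: "(complex \<Rightarrow> 'v::ab_group_add \<Rightarrow> 'v) \<Rightarrow> (complex \<Rightarrow> 'v \<Rightarrow> 'v) \<Rightarrow> complex set \<Rightarrow> 'v set \<Rightarrow> bool" where
  "irred_U0 sc \<rho> H S \<longleftrightarrow> S \<noteq> {0} \<and>
     (\<forall>W. module.subspace sc W \<and> W \<subseteq> S \<and>
          (\<forall>xs. set xs \<subseteq> H \<and> sum_list xs = 0 \<longrightarrow> (\<forall>w\<in>W. mono \<rho> xs w \<in> W))
        \<longrightarrow> W = {0} \<or> W = S)"

definition irred_subquot ::
  "(complex \<Rightarrow> 'v::ab_group_add \<Rightarrow> 'v) \<Rightarrow> (complex \<Rightarrow> 'v \<Rightarrow> 'v) \<Rightarrow> complex set \<Rightarrow> 'v set \<Rightarrow> 'v set \<Rightarrow> 'v set \<Rightarrow> bool" where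
  "irred_subquot sc \<rho> H M W W' \<longleftrightarrow>
     submod sc \<rho> H W \<and> submod sc \<rho> H W' \<and> W' \<subseteq> W \<and> W \<subseteq> M \<and> W' \<noteq> W \<and>
     (\<forall>X. submod sc \<rho> H X \<and> W' \<subseteq> X \<and> X \<subseteq> W \<longrightarrow> X = W' \<or> X = W)"

text \<open>dim (W/W')_\<mu>. Submodules of weight modules are weight modules, so
  (W/W')_\<mu> = W_\<mu>/W'_\<mu>; all weight spaces here are finite-dimensional.\<close>
definition sq_wdim ::
  "(complex \<Rightarrow> 'v::ab_group_add \<Rightarrow> 'v) \<Rightarrow> (complex \<Rightarrow> 'v \<Rightarrow> 'v) \<Rightarrow> 'v set \<Rightarrow> 'v set \<Rightarrow> complex \<Rightarrow> nat" where
  "sq_wdim sc \<rho> W W' \<mu> = vector_space.dim sc (W \<inter> wt sc \<rho> \<mu>) - vector_space.dim sc (W' \<inter> wt sc \<rho> \<mu>)"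

text \<open>W1/W1' and W2/W2' are isomorphic Vir[H]-modules: a linear map f with f(W1) in W2
  inducing a bijective Vir[H]-homomorphism W1/W1' -> W2/W2'.\<close>
definition sq_iso ::
  "(complex \<Rightarrow> 'v::ab_group_add \<Rightarrow> 'v) \<Rightarrow> (complex \<Rightarrow> 'v \<Rightarrow> 'v) \<Rightarrow> complex set \<Rightarrow>
   'v set \<Rightarrow> 'v set \<Rightarrow> 'v set \<Rightarrow> 'v set \<Rightarrow> bool" where
  "sq_iso sc \<rho> H W1 W1' W2 W2' \<longleftrightarrow> (\<exists>f. Vector_Spaces.linear sc sc f \<and>
     (\<forall>w\<in>W1. f w \<in> W2) \<and>
     (\<forall>w\<in>W1. f w \<in> W2' \<longleftrightarrow> w \<in> W1') \<and>
     (\<forall>u\<in>W2. \<exists>w\<in>W1. u - f w \<in> W2') \<and>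
     (\<forall>x\<in>H. \<forall>w\<in>W1. f (\<rho> x w) - \<rho> x (f w) \<in> W2'))"

end

theory Submission
  imports Defs
begin

text \<open>
  Put \<open>W = U(G') V\<^sub>\<lambda>\<close> and let \<open>W'\<close> be the sum of all \<open>Vir[G']\<close>-submodules of \<open>W\<close> that
  meet \<open>V\<^sub>\<lambda>\<close> trivially. Submodules are \<open>d\<^sub>0\<close>-stable and hence contain the weight
  components of their elements, so such a submodule lies in the sum of the weight spaces other
  than \<open>V\<^sub>\<lambda>\<close>; therefore sums of them still meet \<open>V\<^sub>\<lambda>\<close> trivially, and \<open>W'\<close> is the largest
  one. Irreducibility of \<open>V\<^sub>\<mu>\<close> over \<open>U(G\<^sub>I)\<^sub>0\<close> says that every submodule either contains
  \<open>V\<^sub>\<mu>\<close> or meets it in \<open>0\<close>. For \<open>\<mu> = \<lambda>\<close> this makes \<open>W/W'\<close> irreducible, and together with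
  (b) it gives \<open>W\<^sub>\<mu> = V\<^sub>\<mu>\<close> and \<open>W'\<^sub>\<mu> = 0\<close> for all \<open>\<mu> \<in> I\<close>. Conversely, a subquotient
  \<open>X/X'\<close> of the right dimension at \<open>\<lambda>\<close> has \<open>V\<^sub>\<lambda> \<subseteq> X\<close> and \<open>X' \<inter> V\<^sub>\<lambda> = 0\<close>; maximality
  of \<open>W'\<close> and irreducibility of \<open>X/X'\<close> then force \<open>W \<inter> X' = W'\<close> and \<open>X = W + X'\<close>, so the
  inclusion \<open>W \<subseteq> X\<close> induces \<open>W/W' \<cong> X/X'\<close>.

  Only the weight-module structure, \<open>dim V\<^sub>\<lambda> < \<infinity>\<close>, (b) and (c) are needed.
\<close>

lemma submod_antimono: "H' \<subseteq> H \<Longrightarrow> submod sc \<rho> H X \<Longrightarrow> submod sc \<rho> H' X"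
  unfolding submod_def by blast

lemma submod_mono_closed:
  "submod sc \<rho> H X \<Longrightarrow> set xs \<subseteq> H \<Longrightarrow> w \<in> X \<Longrightarrow> mono \<rho> xs w \<in> X"
  by (induction xs) (auto simp: submod_def mono_def)

lemma fin_dim_subset: "fin_dim sc T \<Longrightarrow> S \<subseteq> T \<Longrightarrow> fin_dim sc S"
  unfolding fin_dim_def by blast

lemma sum_list_mem_add_subgroup: "add_subgroup H \<Longrightarrow> set xs \<subseteq> H \<Longrightarrow> sum_list xs \<in> H"
  by (induction xs) (auto simp: add_subgroup_def)

locale complex_vector_space = vector_space scale
  for scale :: "complex \<Rightarrow> 'v::ab_group_add \<Rightarrow> 'v"
begin

lemma fin_dim_independent_bound:
  assumes "fin_dim scale T" "C \<subseteq> T" "independent C"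
  shows "finite C \<and> card C \<le> dim T"
proof -
  obtain B0 where B0: "finite B0" "T \<subseteq> span B0"
    using assms(1) unfolding fin_dim_def by blast
  obtain B where B: "B \<subseteq> T" "independent B" "T \<subseteq> span B" "card B = dim T"
    by (rule basis_exists)
  have "B \<subseteq> span B0"
    using B(1) B0(2) by blast
  then have "finite B"
    using independent_span_bound[OF B0(1) B(2)] by blast
  moreover have "C \<subseteq> span B"
    using assms(2) B(3) by blast
  ultimately show ?thesis
    using independent_span_bound[of B C] assms(3) B(4) by simp
qed

lemma fin_dim_dim_mono:
  assumes "fin_dim scale T" "S \<subseteq> T"
  shows "dim S \<le> dim T"
proof -
  obtain B where B: "B \<subseteq> S" "independent B" "S \<subseteq> span B" "card B = dim S"
    by (rule basis_exists)
  then have "B \<subseteq> T"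
    using assms(2) by blast
  then have "card B \<le> dim T"
    using fin_dim_independent_bound[OF assms(1) _ B(2)] by blast
  then show ?thesis
    using B(4) by linarith
qed

lemma fin_dim_dim_eq_0:
  assumes "fin_dim scale T" "dim T = 0"
  shows "T \<subseteq> {0}"
proof -
  obtain B where B: "B \<subseteq> T" "independent B" "T \<subseteq> span B" "card B = dim T"
    by (rule basis_exists)
  then have "B = {}"
    using fin_dim_independent_bound[OF assms(1) B(1,2)] assms(2) by simp
  then show ?thesis
    using B(3) by simp
qed

lemma fin_dim_subspace_dim_ge:
  assumes "fin_dim scale T" "S \<subseteq> T" "subspace S" "dim T \<le> dim S"
  shows "T \<subseteq> S"
proof -
  obtain B where B: "B \<subseteq> S" "independent B" "S \<subseteq> span B" "card B = dim S"
    by (rule basis_exists)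
  have BT: "B \<subseteq> T"
    using B(1) assms(2) by blast
  have "T \<subseteq> span B"
  proof
    fix t assume t: "t \<in> T"
    show "t \<in> span B"
    proof (rule ccontr)
      assume "t \<notin> span B"
      then have "independent (insert t B)" "t \<notin> B"
        using B(2) independent_insertI span_base by blast+
      moreover have "insert t B \<subseteq> T"
        using t BT by blast
      ultimately have "card (insert t B) \<le> dim T"
        using fin_dim_independent_bound[OF assms(1)] by blast
      moreover have "finite B"
        using fin_dim_independent_bound[OF assms(1) BT B(2)] by blast
      ultimately show False
        using \<open>t \<notin> B\<close> B(4) assms(4) by simp
    qed
  qed
  also have "span B \<subseteq> S"
    using B(1) assms(3) by (rule span_minimal)
  finally show ?thesis .
qed

lemma dim_zero_space: "dim {0} = 0"
  by (metis dim_span span_empty dim_eq_card_independent independent_empty card.empty)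

lemma submod_Int:
  "submod scale \<rho> H A \<Longrightarrow> submod scale \<rho> H B \<Longrightarrow> submod scale \<rho> H (A \<inter> B)"
  unfolding submod_def by (auto intro: subspace_inter)

lemma U_apply_superset: "S \<subseteq> U_apply scale \<rho> H S"
  unfolding U_apply_def
proof
  fix v assume "v \<in> S"
  then have "v \<in> {mono \<rho> xs v |xs v. set xs \<subseteq> H \<and> v \<in> S}"
    by (intro CollectI exI[of _ "[]"] exI[of _ v]) (simp add: mono_def)
  then show "v \<in> span {mono \<rho> xs v |xs v. set xs \<subseteq> H \<and> v \<in> S}"
    by (rule span_base)
qed

lemma U_apply_least:
  assumes "S \<subseteq> X" "submod scale \<rho> H X"
  shows "U_apply scale \<rho> H S \<subseteq> X"
  unfolding U_apply_def
proof (rule span_minimal)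
  show "{mono \<rho> xs v |xs v. set xs \<subseteq> H \<and> v \<in> S} \<subseteq> X"
    using assms submod_mono_closed by blast
  show "subspace X"
    using assms(2) by (simp add: submod_def)
qed

lemma subset_submod_iff_of_U_apply_eq:
  assumes "U_apply scale \<rho> H S = U_apply scale \<rho> H T" "submod scale \<rho> H X"
  shows "S \<subseteq> X \<longleftrightarrow> T \<subseteq> X"
  using assms U_apply_superset[where H = H] U_apply_least[OF _ assms(2)] by blast

lemma sq_iso_inclusion:
  assumes "subspace W" "subspace X'" "W \<subseteq> X" "W' \<subseteq> X'" "W \<inter> X' \<subseteq> W'"
    and "X \<subseteq> span (W \<union> X')"
  shows "sq_iso scale \<rho> H W W' X X'"
  unfolding sq_iso_def
proof (intro exI[of _ id] conjI ballI)
  show "Vector_Spaces.linear scale scale id"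
    by (simp add: id_def linear_ident)
next
  fix u assume "u \<in> X"
  then obtain p q where "u = p + q" "p \<in> span W" "q \<in> span X'"
    using assms(6) unfolding span_Un by blast
  moreover have "span W = W" "span X' = X'"
    using assms(1,2) by (simp_all add: span_eq_iff)
  ultimately show "\<exists>w\<in>W. u - id w \<in> X'"
    by (intro bexI[of _ p]) auto
qed (use assms in \<open>auto simp: subspace_0\<close>)

end

locale weight_action = complex_vector_space scale
  for scale :: "complex \<Rightarrow> 'v::ab_group_add \<Rightarrow> 'v" +
  fixes \<rho> :: "complex \<Rightarrow> 'v \<Rightarrow> 'v" and G :: "complex set"
  assumes linear_action: "x \<in> G \<Longrightarrow> Vector_Spaces.linear scale scale (\<rho> x)"
    and zero_mem: "0 \<in> G"
    and action_wt: "x \<in> G \<Longrightarrow> v \<in> wt scale \<rho> \<mu> \<Longrightarrow> \<rho> x v \<in> wt scale \<rho> (\<mu> + x)"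
begin

abbreviation Wt :: "complex \<Rightarrow> 'v set" where
  "Wt \<mu> \<equiv> wt scale \<rho> \<mu>"

lemma
  assumes "x \<in> G"
  shows action_add: "\<rho> x (u + v) = \<rho> x u + \<rho> x v"
    and action_scale: "\<rho> x (scale a u) = scale a (\<rho> x u)"
    and action_zero: "\<rho> x 0 = 0"
    and action_sum: "\<rho> x (sum f A) = (\<Sum>i\<in>A. \<rho> x (f i))"
    and action_span_image: "\<rho> x ` span S = span (\<rho> x ` S)"
  using linear_action[OF assms]
  by (simp_all add: linear_iff_module_hom module_hom.add module_hom.scale module_hom.zero
      module_hom.sum module_hom.span_image)

lemma subspace_wt: "subspace (Wt \<mu>)"
  unfolding subspace_def wt_def
  by (simp add: zero_mem action_add action_scale action_zero scale_right_distrib mult.commute)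

lemma submod_span:
  assumes "H \<subseteq> G" "\<forall>x\<in>H. \<rho> x ` S \<subseteq> S"
  shows "submod scale \<rho> H (span S)"
  unfolding submod_def
proof (intro conjI ballI subspace_span)
  fix x w assume "x \<in> H" "w \<in> span S"
  then have "\<rho> x w \<in> span (\<rho> x ` S)"
    using action_span_image assms(1) by blast
  also have "\<dots> \<subseteq> span S"
    using assms(2) \<open>x \<in> H\<close> by (intro span_minimal) (auto intro: span_base)
  finally show "\<rho> x w \<in> span S" .
qed

lemma submod_span_Union:
  "H \<subseteq> G \<Longrightarrow> \<forall>N\<in>F. submod scale \<rho> H N \<Longrightarrow> submod scale \<rho> H (span (\<Union>F))"
  by (rule submod_span) (auto simp: submod_def)

lemma submod_U_apply: "H \<subseteq> G \<Longrightarrow> submod scale \<rho> H (U_apply scale \<rho> H S)"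
  unfolding U_apply_def
proof (rule submod_span, safe)
  fix x xs v assume "x \<in> H" "set xs \<subseteq> H" "v \<in> S"
  then show "\<exists>ys w. \<rho> x (mono \<rho> xs v) = mono \<rho> ys w \<and> set ys \<subseteq> H \<and> w \<in> S"
    by (intro exI[of _ "x # xs"] exI[of _ v]) (simp add: mono_def)
qed

lemma mono_wt: "set xs \<subseteq> G \<Longrightarrow> v \<in> Wt \<mu> \<Longrightarrow> mono \<rho> xs v \<in> Wt (\<mu> + sum_list xs)"
proof (induction xs)
  case (Cons x xs)
  then have "\<rho> x (mono \<rho> xs v) \<in> Wt (\<mu> + sum_list xs + x)"
    by (intro action_wt) auto
  then show ?case
    by (simp add: mono_def add_ac)
qed (simp add: mono_def)

lemma U_apply_wt_subset_wsum:
  assumes "add_subgroup H" "H \<subseteq> G"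
  shows "U_apply scale \<rho> H (Wt lam) \<subseteq> wsum scale \<rho> ((+) lam ` H)"
  unfolding U_apply_def wsum_def
proof (rule span_mono, safe)
  fix xs v assume "set xs \<subseteq> H" "v \<in> Wt lam"
  then show "mono \<rho> xs v \<in> (\<Union>\<mu>\<in>(+) lam ` H. Wt \<mu>)"
    using mono_wt[of xs v lam] sum_list_mem_add_subgroup[OF assms(1)] assms(2) by blast
qed

lemma wt_components_mem:
  assumes "finite S" "subspace N" "\<forall>v\<in>N. \<rho> 0 v \<in> N"
    and "\<forall>\<mu>\<in>S. f \<mu> \<in> Wt \<mu>" "(\<Sum>\<mu>\<in>S. f \<mu>) \<in> N"
  shows "\<forall>\<mu>\<in>S. f \<mu> \<in> N"
  using assms(1,4,5)
proof (induction S arbitrary: f rule: finite_induct)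
  case (insert a S)
  define s where "s = (\<Sum>\<mu>\<in>insert a S. f \<mu>)"
  txt \<open>\<open>\<rho> 0 - a\<close> kills the \<open>a\<close>-component of \<open>s\<close> and rescales the others by \<open>\<mu> - a \<noteq> 0\<close>.\<close>
  have "\<rho> 0 s - scale a s = (\<Sum>\<mu>\<in>insert a S. scale \<mu> (f \<mu>)) - scale a s"
    unfolding s_def using insert.prems(1)
    by (auto simp: zero_mem action_sum wt_def intro!: sum.cong)
  also have "\<dots> = (\<Sum>\<mu>\<in>S. scale (\<mu> - a) (f \<mu>))"
    using insert.hyps unfolding s_def
    by (simp add: scale_sum_right scale_left_diff_distrib sum_subtractf scale_right_distrib)
  finally have "(\<Sum>\<mu>\<in>S. scale (\<mu> - a) (f \<mu>)) \<in> N"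
    using insert.prems(2) assms(2,3) s_def by (metis subspace_diff subspace_scale)
  moreover have "\<forall>\<mu>\<in>S. scale (\<mu> - a) (f \<mu>) \<in> Wt \<mu>"
    using insert.prems(1) subspace_wt by (simp add: subspace_scale)
  ultimately have scaled: "\<forall>\<mu>\<in>S. scale (\<mu> - a) (f \<mu>) \<in> N"
    using insert.IH[of "\<lambda>\<mu>. scale (\<mu> - a) (f \<mu>)"] by blast
  have fS: "\<forall>\<mu>\<in>S. f \<mu> \<in> N"
  proof
    fix \<mu> assume "\<mu> \<in> S"
    then have "f \<mu> = scale (1 / (\<mu> - a)) (scale (\<mu> - a) (f \<mu>))"
      using insert.hyps(2) by auto
    then show "f \<mu> \<in> N"
      using scaled \<open>\<mu> \<in> S\<close> assms(2) by (metis subspace_scale)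
  qed
  then have "f a = s - (\<Sum>\<mu>\<in>S. f \<mu>)" "(\<Sum>\<mu>\<in>S. f \<mu>) \<in> N"
    unfolding s_def using insert.hyps assms(2) by (simp_all add: subspace_sum)
  then have "f a \<in> N"
    using insert.prems(2) s_def assms(2) by (metis subspace_diff)
  then show ?case
    using fS by simp
qed simp

lemma span_wt_sum_decomp:
  assumes "v \<in> span (\<Union>\<mu>\<in>A. Wt \<mu>)"
  obtains f S where "finite S" "S \<subseteq> A" "\<forall>\<mu>\<in>S. f \<mu> \<in> Wt \<mu>" "v = (\<Sum>\<mu>\<in>S. f \<mu>)"
proof -
  have "\<exists>f S. finite S \<and> S \<subseteq> A \<and> (\<forall>\<mu>\<in>S. f \<mu> \<in> Wt \<mu>) \<and> v = (\<Sum>\<mu>\<in>S. f \<mu>)"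
    using assms
  proof (induction rule: span_induct_alt)
    case base
    show ?case
      by (intro exI[of _ "\<lambda>_. 0"] exI[of _ "{}"]) simp
  next
    case (step c x y)
    obtain \<mu>0 where \<mu>0: "\<mu>0 \<in> A" "x \<in> Wt \<mu>0"
      using step.hyps by blast
    obtain f S where fS: "finite S" "S \<subseteq> A" "\<forall>\<mu>\<in>S. f \<mu> \<in> Wt \<mu>" "y = (\<Sum>\<mu>\<in>S. f \<mu>)"
      using step.IH by blast
    define f' where "f' = f(\<mu>0 := scale c x + (if \<mu>0 \<in> S then f \<mu>0 else 0))"
    have "\<forall>\<mu>\<in>insert \<mu>0 S. f' \<mu> \<in> Wt \<mu>"
      using fS(3) \<mu>0(2) subspace_wt[of \<mu>0]
      by (auto simp: f'_def subspace_add subspace_scale subspace_0)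
    moreover have "scale c x + y = (\<Sum>\<mu>\<in>insert \<mu>0 S. f' \<mu>)"
    proof -
      have "(\<Sum>\<mu>\<in>S - {\<mu>0}. f' \<mu>) = (\<Sum>\<mu>\<in>S - {\<mu>0}. f \<mu>)"
        by (rule sum.cong) (auto simp: f'_def)
      moreover have "y = (if \<mu>0 \<in> S then f \<mu>0 else 0) + (\<Sum>\<mu>\<in>S - {\<mu>0}. f \<mu>)"
        using fS(1,4) by (cases "\<mu>0 \<in> S") (simp_all add: sum.remove)
      ultimately show ?thesis
        using fS(1) by (simp add: sum.insert_remove f'_def add.assoc)
    qed
    ultimately show ?case
      using fS \<mu>0(1) by (intro exI[of _ f'] exI[of _ "insert \<mu>0 S"]) auto
  qed
  then show ?thesis
    using that by blast
qed

lemma wsum_Int_wt: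
  assumes "lam \<notin> S"
  shows "wsum scale \<rho> S \<inter> Wt lam \<subseteq> {0}"
proof
  fix v assume v: "v \<in> wsum scale \<rho> S \<inter> Wt lam"
  then have "v \<in> span (\<Union>\<mu>\<in>S. Wt \<mu>)"
    by (simp add: wsum_def)
  then obtain f T where T: "finite T" "T \<subseteq> S" "\<forall>\<mu>\<in>T. f \<mu> \<in> Wt \<mu>" "v = (\<Sum>\<mu>\<in>T. f \<mu>)"
    by (rule span_wt_sum_decomp)
  define g where "g = f(lam := - v)"
  have "lam \<notin> T"
    using T(2) assms by blast
  then have "(\<Sum>\<mu>\<in>insert lam T. g \<mu>) = g lam + (\<Sum>\<mu>\<in>T. g \<mu>)"
    using T(1) by (simp add: sum.insert)
  also have "\<dots> = - v + (\<Sum>\<mu>\<in>T. f \<mu>)"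
    using \<open>lam \<notin> T\<close> by (auto simp: g_def intro!: sum.cong)
  finally have "(\<Sum>\<mu>\<in>insert lam T. g \<mu>) \<in> {0}"
    using T(4) by simp
  moreover have "\<forall>\<mu>\<in>insert lam T. g \<mu> \<in> Wt \<mu>"
    using T(3) v subspace_wt[of lam] by (auto simp: g_def subspace_neg)
  moreover have "subspace {0}" "\<forall>v\<in>{0}. \<rho> 0 v \<in> {0}"
    by (simp_all add: subspace_def zero_mem action_zero)
  ultimately have "\<forall>\<mu>\<in>insert lam T. g \<mu> \<in> {0}"
    using wt_components_mem[of "insert lam T" "{0}" g] T(1) by blast
  then have "g lam \<in> {0}"
    by blast
  then show "v \<in> {0}"
    by (simp add: g_def)
qed

lemma stable_subspace_subset_wsum:
  assumes "weight_module scale \<rho>" "subspace N" "\<forall>v\<in>N. \<rho> 0 v \<in> N" "N \<inter> Wt lam \<subseteq> {0}"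
  shows "N \<subseteq> wsum scale \<rho> (- {lam})"
proof
  fix v assume "v \<in> N"
  have "v \<in> span (\<Union>\<mu>\<in>UNIV. Wt \<mu>)"
    using assms(1) by (simp add: weight_module_def wsum_def)
  then obtain f S where S: "finite S" "\<forall>\<mu>\<in>S. f \<mu> \<in> Wt \<mu>" "v = (\<Sum>\<mu>\<in>S. f \<mu>)"
    by (rule span_wt_sum_decomp)
  have fN: "\<forall>\<mu>\<in>S. f \<mu> \<in> N"
    using wt_components_mem[OF S(1) assms(2,3) S(2)] S(3) \<open>v \<in> N\<close> by blast
  show "v \<in> wsum scale \<rho> (- {lam})"
    unfolding S(3) wsum_def
  proof (rule span_sum)
    fix \<mu> assume "\<mu> \<in> S"
    show "f \<mu> \<in> span (\<Union>\<mu>\<in>- {lam}. Wt \<mu>)"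
    proof (cases "\<mu> = lam")
      case True
      then show ?thesis
        using fN S(2) \<open>\<mu> \<in> S\<close> assms(4) by (auto simp: span_zero)
    next
      case False
      then show ?thesis
        using S(2) \<open>\<mu> \<in> S\<close> by (auto intro: span_base)
    qed
  qed
qed

lemma span_Union_submod_Int_wt:
  assumes "weight_module scale \<rho>" "0 \<in> H" "\<forall>N\<in>F. submod scale \<rho> H N \<and> N \<inter> Wt lam \<subseteq> {0}"
  shows "span (\<Union>F) \<inter> Wt lam \<subseteq> {0}"
proof -
  have "span (\<Union>F) \<subseteq> wsum scale \<rho> (- {lam})"
  proof (rule span_minimal)
    show "\<Union>F \<subseteq> wsum scale \<rho> (- {lam})"
    proof
      fix v assume "v \<in> \<Union>F"
      then obtain N where N: "N \<in> F" "v \<in> N"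
        by blast
      then have "subspace N" "\<forall>v\<in>N. \<rho> 0 v \<in> N" "N \<inter> Wt lam \<subseteq> {0}"
        using assms(2,3) unfolding submod_def by auto
      then show "v \<in> wsum scale \<rho> (- {lam})"
        using stable_subspace_subset_wsum[OF assms(1)] N(2) by blast
    qed
    show "subspace (wsum scale \<rho> (- {lam}))"
      unfolding wsum_def by (rule subspace_span)
  qed
  then show ?thesis
    using wsum_Int_wt[of lam "- {lam}"] by blast
qed

lemma irred_U0_wt_dichotomy:
  assumes "H \<subseteq> G" "irred_U0 scale \<rho> H (Wt \<mu>)" "submod scale \<rho> H X"
  shows "Wt \<mu> \<subseteq> X \<or> X \<inter> Wt \<mu> \<subseteq> {0}"
proof -
  have irred: "subspace W \<and> W \<subseteq> Wt \<mu> \<and>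
      (\<forall>xs. set xs \<subseteq> H \<and> sum_list xs = 0 \<longrightarrow> (\<forall>w\<in>W. mono \<rho> xs w \<in> W))
      \<longrightarrow> W = {0} \<or> W = Wt \<mu>" for W
    using assms(2) unfolding irred_U0_def by blast
  have "subspace (X \<inter> Wt \<mu>)"
    using assms(3) subspace_wt unfolding submod_def by (blast intro: subspace_inter)
  moreover have "\<forall>xs. set xs \<subseteq> H \<and> sum_list xs = 0 \<longrightarrow>
      (\<forall>w\<in>X \<inter> Wt \<mu>. mono \<rho> xs w \<in> X \<inter> Wt \<mu>)"
    using submod_mono_closed[OF assms(3)] mono_wt assms(1) by fastforce
  ultimately have "X \<inter> Wt \<mu> = {0} \<or> X \<inter> Wt \<mu> = Wt \<mu>"
    using irred[of "X \<inter> Wt \<mu>"] by blast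
  then show ?thesis
    by blast
qed

definition max_submod_avoiding :: "complex set \<Rightarrow> 'v set \<Rightarrow> complex \<Rightarrow> 'v set" where
  "max_submod_avoiding H W lam = span (\<Union>{N. submod scale \<rho> H N \<and> N \<subseteq> W \<and> N \<inter> Wt lam \<subseteq> {0}})"

lemma submod_max_submod_avoiding: "H \<subseteq> G \<Longrightarrow> submod scale \<rho> H (max_submod_avoiding H W lam)"
  unfolding max_submod_avoiding_def by (rule submod_span_Union) auto

lemma max_submod_avoiding_subset: "subspace W \<Longrightarrow> max_submod_avoiding H W lam \<subseteq> W"
  unfolding max_submod_avoiding_def by (rule span_minimal) auto

lemma max_submod_avoiding_Int_wt:
  "weight_module scale \<rho> \<Longrightarrow> 0 \<in> H \<Longrightarrow> max_submod_avoiding H W lam \<inter> Wt lam \<subseteq> {0}"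
  unfolding max_submod_avoiding_def by (rule span_Union_submod_Int_wt) auto

lemma subset_max_submod_avoiding:
  "submod scale \<rho> H N \<Longrightarrow> N \<subseteq> W \<Longrightarrow> N \<inter> Wt lam \<subseteq> {0} \<Longrightarrow> N \<subseteq> max_submod_avoiding H W lam"
  unfolding max_submod_avoiding_def by (blast intro: span_base)

lemma irred_subquot_U_apply_wt:
  assumes "weight_module scale \<rho>" "add_subgroup H" "H \<subseteq> G" "\<not> Wt lam \<subseteq> {0}"
    and "K \<subseteq> H" "irred_U0 scale \<rho> K (Wt lam)"
  shows "irred_subquot scale \<rho> H (wsum scale \<rho> ((+) lam ` H))
    (U_apply scale \<rho> H (Wt lam)) (max_submod_avoiding H (U_apply scale \<rho> H (Wt lam)) lam)"
proof -
  define W where "W = U_apply scale \<rho> H (Wt lam)"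
  define W' where "W' = max_submod_avoiding H W lam"
  have "0 \<in> H"
    using assms(2) by (simp add: add_subgroup_def)
  have W: "submod scale \<rho> H W" "Wt lam \<subseteq> W"
    unfolding W_def using submod_U_apply[OF assms(3)] U_apply_superset by blast+
  have W': "submod scale \<rho> H W'" "W' \<subseteq> W" "W' \<inter> Wt lam \<subseteq> {0}"
    unfolding W'_def using submod_max_submod_avoiding[OF assms(3)] W(1)
      max_submod_avoiding_subset max_submod_avoiding_Int_wt[OF assms(1) \<open>0 \<in> H\<close>]
    by (auto simp: submod_def)
  have dichotomy: "Wt lam \<subseteq> X \<or> X \<inter> Wt lam \<subseteq> {0}" if "submod scale \<rho> H X" for X
    using irred_U0_wt_dichotomy[OF _ assms(6) submod_antimono[OF assms(5) that]] assms(3,5) by blast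
  have "X = W' \<or> X = W" if "submod scale \<rho> H X" "W' \<subseteq> X" "X \<subseteq> W" for X
    using dichotomy[OF that(1)]
  proof
    assume "Wt lam \<subseteq> X"
    then show ?thesis
      unfolding W_def using U_apply_least that(1,3) W_def by blast
  next
    assume "X \<inter> Wt lam \<subseteq> {0}"
    then show ?thesis
      unfolding W'_def using subset_max_submod_avoiding that W'_def by blast
  qed
  moreover have "W' \<noteq> W"
    using W(2) W'(3) assms(4) by blast
  moreover have "W \<subseteq> wsum scale \<rho> ((+) lam ` H)"
    unfolding W_def by (rule U_apply_wt_subset_wsum[OF assms(2,3)])
  ultimately show ?thesis
    using W(1) W'(1,2) unfolding irred_subquot_def W_def W'_def by blast
qed

lemma irred_subquot_span_Un:
  assumes "H \<subseteq> G" "irred_subquot scale \<rho> H M X X'" "submod scale \<rho> H A" "A \<subseteq> X"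
  shows "span (A \<union> X') = X' \<or> span (A \<union> X') = X"
proof -
  have X: "submod scale \<rho> H X" "submod scale \<rho> H X'" "X' \<subseteq> X"
    and between: "\<And>Z. submod scale \<rho> H Z \<Longrightarrow> X' \<subseteq> Z \<Longrightarrow> Z \<subseteq> X \<Longrightarrow> Z = X' \<or> Z = X"
    using assms(2) unfolding irred_subquot_def by auto
  show ?thesis
  proof (rule between)
    show "submod scale \<rho> H (span (A \<union> X'))"
      using submod_span_Union[OF assms(1), of "{A, X'}"] assms(3) X(2) by simp
    show "span (A \<union> X') \<subseteq> X"
      by (rule span_minimal) (use assms(4) X in \<open>auto simp: submod_def\<close>)
    show "X' \<subseteq> span (A \<union> X')"
      by (meson span_superset Un_upper2 subset_trans)
  qed
qed

lemma sq_iso_U_apply_wt: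
  assumes "weight_module scale \<rho>" "0 \<in> H" "H \<subseteq> G" "\<not> Wt lam \<subseteq> {0}"
    and XX': "irred_subquot scale \<rho> H M X X'" "Wt lam \<subseteq> X" "X' \<inter> Wt lam \<subseteq> {0}"
  shows "sq_iso scale \<rho> H
    (U_apply scale \<rho> H (Wt lam)) (max_submod_avoiding H (U_apply scale \<rho> H (Wt lam)) lam) X X'"
proof -
  define W where "W = U_apply scale \<rho> H (Wt lam)"
  define W' where "W' = max_submod_avoiding H W lam"
  have X: "submod scale \<rho> H X" "submod scale \<rho> H X'"
    using XX'(1) unfolding irred_subquot_def by auto
  have W: "submod scale \<rho> H W"
    unfolding W_def by (rule submod_U_apply[OF assms(3)])
  have "Wt lam \<subseteq> W"
    unfolding W_def by (rule U_apply_superset)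
  have "W \<subseteq> X"
    unfolding W_def by (rule U_apply_least[OF XX'(2) X(1)])
  have W': "submod scale \<rho> H W'"
    unfolding W'_def by (rule submod_max_submod_avoiding[OF assms(3)])
  have "W' \<subseteq> W"
    unfolding W'_def using W by (simp add: max_submod_avoiding_subset submod_def)
  have "W' \<inter> Wt lam \<subseteq> {0}"
    unfolding W'_def by (rule max_submod_avoiding_Int_wt[OF assms(1,2)])
  have "span (W' \<union> X') \<inter> Wt lam \<subseteq> {0}"
    using span_Union_submod_Int_wt[OF assms(1,2), of "{W', X'}"] W' X(2)
      \<open>W' \<inter> Wt lam \<subseteq> {0}\<close> XX'(3)
    by simp
  then have "span (W' \<union> X') \<noteq> X"
    using XX'(2) assms(4) by blast
  moreover have "W' \<subseteq> X"
    using \<open>W' \<subseteq> W\<close> \<open>W \<subseteq> X\<close> by (rule subset_trans)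
  ultimately have "span (W' \<union> X') = X'"
    using irred_subquot_span_Un[OF assms(3) XX'(1) W'] by blast
  then have "W' \<subseteq> X'"
    using span_superset[of "W' \<union> X'"] by blast
  have "\<not> Wt lam \<subseteq> X'"
    using XX'(3) assms(4) by blast
  then have "span (W \<union> X') \<noteq> X'"
    using \<open>Wt lam \<subseteq> W\<close> span_superset[of "W \<union> X'"] by blast
  then have "X \<subseteq> span (W \<union> X')"
    using irred_subquot_span_Un[OF assms(3) XX'(1) W \<open>W \<subseteq> X\<close>] by blast
  moreover have "W \<inter> X' \<subseteq> W'"
    unfolding W'_def using XX'(3)
    by (intro subset_max_submod_avoiding[OF submod_Int[OF W X(2)]]) auto
  moreover have "subspace W" "subspace X'"
    using W X(2) by (simp_all add: submod_def)
  ultimately have "sq_iso scale \<rho> H W W' X X'"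
    using sq_iso_inclusion \<open>W \<subseteq> X\<close> \<open>W' \<subseteq> X'\<close> by blast
  then show ?thesis
    unfolding W'_def W_def .
qed

lemma sq_wdim_U_apply_wt:
  assumes "weight_module scale \<rho>" "0 \<in> H" "H \<subseteq> G" "\<not> Wt lam \<subseteq> {0}"
    and "K \<subseteq> H" "U_apply scale \<rho> K (Wt \<mu>) = U_apply scale \<rho> K (Wt lam)"
    and "irred_U0 scale \<rho> K (Wt \<mu>)"
  shows "sq_wdim scale \<rho>
    (U_apply scale \<rho> H (Wt lam)) (max_submod_avoiding H (U_apply scale \<rho> H (Wt lam)) lam) \<mu>
    = dim (Wt \<mu>)"
proof -
  have same: "Wt \<mu> \<subseteq> Y \<longleftrightarrow> Wt lam \<subseteq> Y" if "submod scale \<rho> H Y" for Y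
    using subset_submod_iff_of_U_apply_eq[OF assms(6) submod_antimono[OF assms(5) that]] .
  have dichotomy: "Wt \<mu> \<subseteq> Y \<or> Y \<inter> Wt \<mu> \<subseteq> {0}" if "submod scale \<rho> H Y" for Y
    using irred_U0_wt_dichotomy[OF _ assms(7) submod_antimono[OF assms(5) that]] assms(3,5) by blast
  define W where "W = U_apply scale \<rho> H (Wt lam)"
  define W' where "W' = max_submod_avoiding H W lam"
  have W: "submod scale \<rho> H W" "Wt lam \<subseteq> W"
    unfolding W_def by (rule submod_U_apply[OF assms(3)], rule U_apply_superset)
  have W': "submod scale \<rho> H W'" "W' \<inter> Wt lam \<subseteq> {0}"
    unfolding W'_def
    by (rule submod_max_submod_avoiding[OF assms(3)], rule max_submod_avoiding_Int_wt[OF assms(1,2)])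
  have "W \<inter> Wt \<mu> = Wt \<mu>"
    using same[OF W(1)] W(2) by blast
  have "\<not> Wt \<mu> \<subseteq> W'"
    using same[OF W'(1)] W'(2) assms(4) by blast
  then have "W' \<inter> Wt \<mu> \<subseteq> {0}"
    using dichotomy[OF W'(1)] by blast
  moreover have "0 \<in> W' \<inter> Wt \<mu>"
    using W'(1) subspace_wt[of \<mu>] unfolding submod_def by (simp add: subspace_0)
  ultimately have "W' \<inter> Wt \<mu> = {0}"
    by blast
  then have "sq_wdim scale \<rho> W W' \<mu> = dim (Wt \<mu>)"
    unfolding sq_wdim_def using \<open>W \<inter> Wt \<mu> = Wt \<mu>\<close> by (simp add: dim_zero_space)
  then show ?thesis
    unfolding W'_def W_def .
qed

lemma sq_wdim_eq_dim_wtD: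
  assumes "fin_dim scale (Wt lam)" "\<not> Wt lam \<subseteq> {0}" "subspace X"
    and "sq_wdim scale \<rho> X X' lam = dim (Wt lam)"
  shows "Wt lam \<subseteq> X" "X' \<inter> Wt lam \<subseteq> {0}"
proof -
  have "dim (X \<inter> Wt lam) \<le> dim (Wt lam)"
    by (rule fin_dim_dim_mono[OF assms(1) Int_lower2])
  moreover have "dim (Wt lam) \<noteq> 0"
    using fin_dim_dim_eq_0[OF assms(1)] assms(2) by blast
  ultimately have "dim (X' \<inter> Wt lam) = 0" "dim (Wt lam) \<le> dim (X \<inter> Wt lam)"
    using assms(4) unfolding sq_wdim_def by linarith+
  have "Wt lam \<subseteq> X \<inter> Wt lam"
    by (rule fin_dim_subspace_dim_ge[OF assms(1) Int_lower2 subspace_inter[OF assms(3) subspace_wt]])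
      fact
  then show "Wt lam \<subseteq> X"
    by blast
  show "X' \<inter> Wt lam \<subseteq> {0}"
    by (rule fin_dim_dim_eq_0[OF fin_dim_subset[OF assms(1) Int_lower2]]) fact
qed

end

lemma weight_action_of_vir_module:
  assumes "add_subgroup G" "vir_module sc G c \<rho>"
  shows "weight_action sc \<rho> G"
proof -
  interpret vector_space sc
    using assms(2) by (simp add: vir_module_def)
  have lin: "Vector_Spaces.linear sc sc (\<rho> x)" if "x \<in> G" for x
    using assms(2) that by (simp add: vir_module_def)
  have "0 \<in> G"
    using assms(1) by (simp add: add_subgroup_def)
  moreover have "\<rho> x v \<in> wt sc \<rho> (\<mu> + x)" if "x \<in> G" "v \<in> wt sc \<rho> \<mu>" for x v \<mu>
  proof -
    have "\<rho> 0 (\<rho> x v) - \<rho> x (\<rho> 0 v) = sc x (\<rho> x v)"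
      using assms(2) \<open>0 \<in> G\<close> that(1) unfolding vir_module_def by fastforce
    moreover have "\<rho> x (\<rho> 0 v) = sc \<mu> (\<rho> x v)"
      using that lin[OF that(1)] by (simp add: wt_def linear_iff_module_hom module_hom.scale)
    ultimately show ?thesis
      by (simp add: wt_def scale_left_distrib algebra_simps)
  qed
  ultimately show ?thesis
    unfolding weight_action_def weight_action_axioms_def complex_vector_space_def
    using lin vector_space_axioms by blast
qed

theorem lemma3p2:
  fixes sc :: "complex \<Rightarrow> 'v::ab_group_add \<Rightarrow> 'v"
    and \<rho> :: "complex \<Rightarrow> 'v \<Rightarrow> 'v"
    and G GI G' I :: "complex set" and c lam :: complex
  assumes G: "add_subgroup G" and rk: "grank G \<ge> 2"
    and V: "vir_module sc G c \<rho>" and HC: "harish_chandra sc \<rho>"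
    and irr: "irreducible_module sc \<rho> G" and nontriv: "\<not> trivial_module sc G c \<rho>"
    and I: "finite I" "I \<subseteq> supp sc \<rho>"
    and GI: "add_subgroup GI" "GI \<subseteq> G"
    and a: "\<exists>k::nat. k \<ge> 1 \<and> iso_Zk GI k"
    and b: "\<forall>\<mu>\<in>I. \<forall>\<mu>'\<in>I. U_apply sc \<rho> GI (wt sc \<rho> \<mu>) = U_apply sc \<rho> GI (wt sc \<rho> \<mu>')
                          \<and> \<mu> - \<mu>' \<in> GI"
    and cc: "\<forall>\<mu>\<in>I. irred_U0 sc \<rho> GI (wt sc \<rho> \<mu>)"
    and G': "add_subgroup G'" "GI \<subseteq> G'" "G' \<subseteq> G"
    and lam: "lam \<in> I"
  shows "\<exists>W W'. irred_subquot sc \<rho> G' (wsum sc \<rho> ((+) lam ` G')) W W' \<and>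
           (\<forall>\<mu>\<in>I. sq_wdim sc \<rho> W W' \<mu> = vector_space.dim sc (wt sc \<rho> \<mu>)) \<and>
           (\<forall>X X'. irred_subquot sc \<rho> G' (wsum sc \<rho> ((+) lam ` G')) X X' \<and>
                   (\<forall>\<mu>\<in>I. sq_wdim sc \<rho> X X' \<mu> = vector_space.dim sc (wt sc \<rho> \<mu>))
                   \<longrightarrow> sq_iso sc \<rho> G' W W' X X')"
proof -
  interpret weight_action sc \<rho> G
    using G V by (rule weight_action_of_vir_module)
  have wm: "weight_module sc \<rho>" and fd: "fin_dim sc (Wt lam)"
    using HC by (simp_all add: harish_chandra_def)
  have "0 \<in> G'"
    using G'(1) by (simp add: add_subgroup_def)
  have ne: "\<not> Wt lam \<subseteq> {0}"
    using I(2) lam subspace_wt[of lam] unfolding supp_def by (auto intro: subspace_0)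
  define W where "W = U_apply sc \<rho> G' (Wt lam)"
  define W' where "W' = max_submod_avoiding G' W lam"
  have "irred_subquot sc \<rho> G' (wsum sc \<rho> ((+) lam ` G')) W W'"
    unfolding W_def W'_def
    using irred_subquot_U_apply_wt[OF wm G'(1,3) ne G'(2)] cc lam by blast
  moreover have "\<forall>\<mu>\<in>I. sq_wdim sc \<rho> W W' \<mu> = dim (Wt \<mu>)"
    unfolding W_def W'_def
    using sq_wdim_U_apply_wt[OF wm \<open>0 \<in> G'\<close> G'(3) ne G'(2)] b cc lam by blast
  moreover have "sq_iso sc \<rho> G' W W' X X'"
    if "irred_subquot sc \<rho> G' (wsum sc \<rho> ((+) lam ` G')) X X'"
      "\<forall>\<mu>\<in>I. sq_wdim sc \<rho> X X' \<mu> = dim (Wt \<mu>)" for X X'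
  proof -
    have "subspace X"
      using that(1) by (simp add: irred_subquot_def submod_def)
    then have "Wt lam \<subseteq> X" "X' \<inter> Wt lam \<subseteq> {0}"
      using sq_wdim_eq_dim_wtD[OF fd ne] that(2) lam by blast+
    then show ?thesis
      unfolding W_def W'_def by (rule sq_iso_U_apply_wt[OF wm \<open>0 \<in> G'\<close> G'(3) ne that(1)])
  qed
  ultimately show ?thesis
    by blast
qed

end
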